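(* Let $d$ be prime, $n\ge1$, $G$ invertible over $\mathbb Z_d$, and $\rho,\tau,\sigma,\rho_1,\rho_2,\sigma_1,\sigma_2$ be $n$-qudit states. (1) If $G$ is odd-parity positive, $\|\sigma\boxtimes\rho-\sigma\boxtimes\tau\|_{W_1}\le\|\rho-\tau\|_{W_1}$. (2) If $G$ is even-parity positive, $\|\rho\boxtimes\sigma-\tau\boxtimes\sigma\|_{W_1}\le\|\rho-\tau\|_{W_1}$. (3) If $G$ is positive, $\|\rho_1\boxtimes\sigma_1-\rho_2\boxtimes\sigma_2\|_{W_1}\le\|\rho_1-\rho_2\|_{W_1}+\|\sigma_1-\sigma_2\|_{W_1}$.
   Context: Fix a prime $d$. Let $G=\begin{pmatrix}g_{00}&g_{01}\\ g_{10}&g_{11}\end{pmatrix}$ over $\mathbb Z_d$ with $\det G\not\equiv0$, $N=(\det G)^{-1}$. $G$ is nontrivial if at most one entry is $0$ mod $d$; odd-parity positive if nontrivial and $g_{01},g_{10}\not\equiv0$; even-parity positive if nontrivial and $g_{00},g_{11}\not\equiv0$; positive if both. Key unitary on $(\mathbb C^d)^{\otimes n}\otimes(\mathbb C^d)^{\otimes n}$: $U|\vec i\rangle|\vec j\rangle=|Ng_{11}\vec i-Ng_{10}\vec j\rangle|-Ng_{01}\vec i+Ng_{00}\vec j\rangle$; convolution $\rho\boxtimes\sigma=\mathrm{Tr}_B[U(\rho\otimes\sigma)U^\dagger]$. The quantum Wasserstein distance of order 1 (De Palma–Marvian–Trevisan–Lloyd) is $\|\rho-\sigma\|_{W_1}=\min\{\sum_{i=1}^n|c_i|:\rho-\sigma=\sum_{i=1}^nc_i(\rho_i-\sigma_i),\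 \rho_i,\sigma_i\ n\text{-qudit states},\ \mathrm{Tr}_i\rho_i=\mathrm{Tr}_i\sigma_i\ \forall i\}$, where $\mathrm{Tr}_i$ is the partial trace over the $i$-th qudit. *)

theory Defs
  imports Complex_Main "HOL-Computational_Algebra.Primes"
begin

(* Computational basis labels of n qudits of dimension d: functions
   {0..<n} -> {0..<d}, extended by 0 outside {0..<n}. *)
definition qbasis :: "nat \<Rightarrow> nat \<Rightarrow> (nat \<Rightarrow> nat) set" where
  "qbasis d n = {x. (\<forall>k<n. x k < d) \<and> (\<forall>k\<ge>n. x k = 0)}"

(* Operators on span of a finite basis S are matrices 'a => 'a => complex;
   only entries on S x S are meaningful. *)
definition mmul :: "'a set \<Rightarrow> ('a \<Rightarrow> 'a \<Rightarrow> complex) \<Rightarrow> ('a \<Rightarrow> 'a \<Rightarrow> complex) \<Rightarrow> ('a \<Rightarrow> 'a \<Rightarrow> complex)" where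
  "mmul S A B = (\<lambda>x y. \<Sum>z\<in>S. A x z * B z y)"

definition adj :: "('a \<Rightarrow> 'a \<Rightarrow> complex) \<Rightarrow> ('a \<Rightarrow> 'a \<Rightarrow> complex)" where
  "adj A = (\<lambda>x y. cnj (A y x))"

definition mtrace :: "'a set \<Rightarrow> ('a \<Rightarrow> 'a \<Rightarrow> complex) \<Rightarrow> complex" where
  "mtrace S A = (\<Sum>x\<in>S. A x x)"

definition psd :: "'a set \<Rightarrow> ('a \<Rightarrow> 'a \<Rightarrow> complex) \<Rightarrow> bool" where
  "psd S A = (\<forall>v :: 'a \<Rightarrow> complex.
      Im (\<Sum>x\<in>S. \<Sum>y\<in>S. cnj (v x) * A x y * v y) = 0 \<and>
      Re (\<Sum>x\<in>S. \<Sum>y\<in>S. cnj (v x) * A x y * v y) \<ge> 0)"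

definition qstate :: "nat \<Rightarrow> nat \<Rightarrow> ((nat \<Rightarrow> nat) \<Rightarrow> (nat \<Rightarrow> nat) \<Rightarrow> complex) \<Rightarrow> bool" where
  "qstate d n A = (psd (qbasis d n) A \<and> mtrace (qbasis d n) A = 1)"

(* partial trace over the i-th qudit; the result does not depend on the
   i-th coordinate of its arguments *)
definition ptr1 :: "nat \<Rightarrow> nat \<Rightarrow> ((nat \<Rightarrow> nat) \<Rightarrow> (nat \<Rightarrow> nat) \<Rightarrow> complex)
                      \<Rightarrow> ((nat \<Rightarrow> nat) \<Rightarrow> (nat \<Rightarrow> nat) \<Rightarrow> complex)" where
  "ptr1 d i A = (\<lambda>x y. \<Sum>k<d. A (x(i := k)) (y(i := k)))"

definition ptr1_eq :: "nat \<Rightarrow> nat \<Rightarrow> nat \<Rightarrow> ((nat \<Rightarrow> nat) \<Rightarrow> (nat \<Rightarrow> nat) \<Rightarrow> complex)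
                      \<Rightarrow> ((nat \<Rightarrow> nat) \<Rightarrow> (nat \<Rightarrow> nat) \<Rightarrow> complex) \<Rightarrow> bool" where
  "ptr1_eq d n i A B = (\<forall>x\<in>qbasis d n. \<forall>y\<in>qbasis d n. ptr1 d i A x y = ptr1 d i B x y)"

(* quantum Wasserstein distance of order 1 of the operator X (De Palma et al.) *)
definition W1 :: "nat \<Rightarrow> nat \<Rightarrow> ((nat \<Rightarrow> nat) \<Rightarrow> (nat \<Rightarrow> nat) \<Rightarrow> complex) \<Rightarrow> real" where
  "W1 d n X = Inf {(\<Sum>i<n. \<bar>c i\<bar>) | c rs ss.
       (\<forall>i<n. qstate d n (rs i) \<and> qstate d n (ss i) \<and> ptr1_eq d n i (rs i) (ss i)) \<and>
       (\<forall>x\<in>qbasis d n. \<forall>y\<in>qbasis d n.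
          X x y = (\<Sum>i<n. complex_of_real (c i) * (rs i x y - ss i x y)))}"

definition mdiff :: "('a \<Rightarrow> 'a \<Rightarrow> complex) \<Rightarrow> ('a \<Rightarrow> 'a \<Rightarrow> complex) \<Rightarrow> ('a \<Rightarrow> 'a \<Rightarrow> complex)" where
  "mdiff A B = (\<lambda>x y. A x y - B x y)"

definition inv_modd :: "nat \<Rightarrow> int \<Rightarrow> int" where
  "inv_modd d a = (SOME b. 0 \<le> b \<and> b < int d \<and> (a * b) mod int d = 1)"

definition det2 :: "int \<Rightarrow> int \<Rightarrow> int \<Rightarrow> int \<Rightarrow> int" where
  "det2 g00 g01 g10 g11 = g00 * g11 - g01 * g10"

definition lincomb :: "nat \<Rightarrow> int \<Rightarrow> int \<Rightarrow> (nat \<Rightarrow> nat) \<Rightarrow> (nat \<Rightarrow> nat) \<Rightarrow> (nat \<Rightarrow> nat)" where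
  "lincomb d a b i j = (\<lambda>k. nat ((a * int (i k) + b * int (j k)) mod int d))"

definition Umap :: "nat \<Rightarrow> int \<Rightarrow> int \<Rightarrow> int \<Rightarrow> int \<Rightarrow> (nat \<Rightarrow> nat) \<times> (nat \<Rightarrow> nat) \<Rightarrow> (nat \<Rightarrow> nat) \<times> (nat \<Rightarrow> nat)" where
  "Umap d g00 g01 g10 g11 p =
     (let N = inv_modd d (det2 g00 g01 g10 g11) in
       (lincomb d (N * g11) (- N * g10) (fst p) (snd p),
        lincomb d (- N * g01) (N * g00) (fst p) (snd p)))"

definition Umat :: "nat \<Rightarrow> int \<Rightarrow> int \<Rightarrow> int \<Rightarrow> int \<Rightarrow> ((nat \<Rightarrow> nat) \<times> (nat \<Rightarrow> nat)) \<Rightarrow> ((nat \<Rightarrow> nat) \<times> (nat \<Rightarrow> nat)) \<Rightarrow> complex" where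
  "Umat d g00 g01 g10 g11 = (\<lambda>p r. if p = Umap d g00 g01 g10 g11 r then 1 else 0)"

definition tensor :: "('a \<Rightarrow> 'a \<Rightarrow> complex) \<Rightarrow> ('b \<Rightarrow> 'b \<Rightarrow> complex) \<Rightarrow> ('a \<times> 'b \<Rightarrow> 'a \<times> 'b \<Rightarrow> complex)" where
  "tensor A B = (\<lambda>p q. A (fst p) (fst q) * B (snd p) (snd q))"

definition ptrB :: "'b set \<Rightarrow> ('a \<times> 'b \<Rightarrow> 'a \<times> 'b \<Rightarrow> complex) \<Rightarrow> ('a \<Rightarrow> 'a \<Rightarrow> complex)" where
  "ptrB S X = (\<lambda>a a'. \<Sum>b\<in>S. X (a, b) (a', b))"

definition qconv :: "nat \<Rightarrow> nat \<Rightarrow> int \<Rightarrow> int \<Rightarrow> int \<Rightarrow> int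
     \<Rightarrow> ((nat \<Rightarrow> nat) \<Rightarrow> (nat \<Rightarrow> nat) \<Rightarrow> complex) \<Rightarrow> ((nat \<Rightarrow> nat) \<Rightarrow> (nat \<Rightarrow> nat) \<Rightarrow> complex)
     \<Rightarrow> ((nat \<Rightarrow> nat) \<Rightarrow> (nat \<Rightarrow> nat) \<Rightarrow> complex)" where
  "qconv d n g00 g01 g10 g11 \<rho> \<sigma> =
     (let S2 = qbasis d n \<times> qbasis d n; U = Umat d g00 g01 g10 g11 in
       ptrB (qbasis d n) (mmul S2 (mmul S2 U (tensor \<rho> \<sigma>)) (adj U)))"

definition nontrivial :: "nat \<Rightarrow> int \<Rightarrow> int \<Rightarrow> int \<Rightarrow> int \<Rightarrow> bool" where
  "nontrivial d g00 g01 g10 g11 =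
     (length (filter (\<lambda>g. g mod int d = 0) [g00, g01, g10, g11]) \<le> 1)"

definition odd_pos :: "nat \<Rightarrow> int \<Rightarrow> int \<Rightarrow> int \<Rightarrow> int \<Rightarrow> bool" where
  "odd_pos d g00 g01 g10 g11 = (nontrivial d g00 g01 g10 g11 \<and>
      g01 mod int d \<noteq> 0 \<and> g10 mod int d \<noteq> 0)"

definition even_pos :: "nat \<Rightarrow> int \<Rightarrow> int \<Rightarrow> int \<Rightarrow> int \<Rightarrow> bool" where
  "even_pos d g00 g01 g10 g11 = (nontrivial d g00 g01 g10 g11 \<and>
      g00 mod int d \<noteq> 0 \<and> g11 mod int d \<noteq> 0)"

definition positive_G :: "nat \<Rightarrow> int \<Rightarrow> int \<Rightarrow> int \<Rightarrow> int \<Rightarrow> bool" where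
  "positive_G d g00 g01 g10 g11 = (odd_pos d g00 g01 g10 g11 \<and> even_pos d g00 g01 g10 g11)"

end

theory Submission
  imports Defs "HOL-Library.Complex_Order"
begin

text \<open>The key unitary permutes the computational basis by the same invertible linear map of
  \<open>\<int>\<^sub>d\<^sup>2\<close> on every pair of \<open>i\<close>-th qudits. Hence \<open>\<rho> \<boxtimes> \<sigma>\<close> is, in each argument, a weighted sum of
  pullbacks of that argument: it is linear, maps states to states (positivity via Gram
  decompositions), and its partial trace over qudit \<open>i\<close> only depends on the partial traces over
  qudit \<open>i\<close> of \<open>\<rho>\<close> and \<open>\<sigma>\<close>. Applying \<open>\<sigma> \<boxtimes> _\<close> (or \<open>_ \<boxtimes> \<sigma>\<close>) termwise to a decomposition
  \<open>\<rho> - \<tau> = \<Sum>\<^sub>i c\<^sub>i (\<rho>\<^sub>i - \<sigma>\<^sub>i)\<close> with \<open>Tr\<^sub>i \<rho>\<^sub>i = Tr\<^sub>i \<sigma>\<^sub>i\<close> therefore gives an admissible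
  decomposition of the convolved difference with the same cost \<open>\<Sum>\<^sub>i |c\<^sub>i|\<close>; the third claim
  follows from the first two by the triangle inequality. Such decompositions exist for any two
  states, by telescoping through the states whose first \<open>i\<close> qudits are maximally mixed, so the
  infimum defining \<open>W\<^sub>1\<close> is over a nonempty set.\<close>

section \<open>Positive semidefinite matrices\<close>

definition quad_form :: "'a set \<Rightarrow> ('a \<Rightarrow> 'a \<Rightarrow> complex) \<Rightarrow> ('a \<Rightarrow> complex) \<Rightarrow> complex" where
  "quad_form S A v = (\<Sum>x\<in>S. \<Sum>y\<in>S. cnj (v x) * A x y * v y)"

lemma psd_iff_quad_form_nonneg: "psd S A \<longleftrightarrow> (\<forall>v. 0 \<le> quad_form S A v)"
  by (auto simp: psd_def quad_form_def less_eq_complex_def)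

lemma quad_form_cong:
  "(\<And>x. x \<in> S \<Longrightarrow> v x = w x) \<Longrightarrow> (\<And>x y. x \<in> S \<Longrightarrow> y \<in> S \<Longrightarrow> A x y = B x y)
    \<Longrightarrow> quad_form S A v = quad_form S B w"
  unfolding quad_form_def by (intro sum.cong refl) auto

lemma psd_cong: "(\<And>x y. x \<in> S \<Longrightarrow> y \<in> S \<Longrightarrow> A x y = B x y) \<Longrightarrow> psd S A = psd S B"
  unfolding psd_iff_quad_form_nonneg using quad_form_cong[of S _ _ A B] by metis

lemma quad_form_mono_neutral:
  assumes "finite S" "T \<subseteq> S" "\<forall>u\<in>S - T. v u = 0"
  shows "quad_form S A v = quad_form T A v"
proof -
  have "quad_form S A v = (\<Sum>x\<in>T. \<Sum>y\<in>S. cnj (v x) * A x y * v y)"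
    unfolding quad_form_def by (rule sum.mono_neutral_right) (use assms in auto)
  also have "\<dots> = quad_form T A v"
    unfolding quad_form_def by (intro sum.cong refl sum.mono_neutral_right) (use assms in auto)
  finally show ?thesis .
qed

lemma quad_form_single:
  assumes "finite S" "x \<in> S"
  shows "quad_form S A (\<lambda>u. if u = x then a else 0) = cnj a * A x x * a"
proof -
  have "quad_form S A (\<lambda>u. if u = x then a else 0) = quad_form {x} A (\<lambda>u. if u = x then a else 0)"
    by (rule quad_form_mono_neutral) (use assms in auto)
  then show ?thesis by (simp add: quad_form_def)
qed

lemma quad_form_pair:
  assumes "finite S" "x \<in> S" "y \<in> S" "x \<noteq> y"
  shows "quad_form S A (\<lambda>u. if u = x then a else if u = y then b else 0)
       = cnj a * A x x * a + cnj a * A x y * b + cnj b * A y x * a + cnj b * A y y * b"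
proof -
  have "quad_form S A (\<lambda>u. if u = x then a else if u = y then b else 0)
      = quad_form {x,y} A (\<lambda>u. if u = x then a else if u = y then b else 0)"
    by (rule quad_form_mono_neutral) (use assms in auto)
  then show ?thesis using assms(4) by (simp add: quad_form_def algebra_simps)
qed

lemma psd_diag_nonneg:
  assumes "finite S" "psd S A" "x \<in> S"
  shows "0 \<le> A x x"
proof -
  have "0 \<le> quad_form S A (\<lambda>u. if u = x then 1 else 0)"
    using assms(2) unfolding psd_iff_quad_form_nonneg ..
  then show ?thesis by (simp add: quad_form_single[OF assms(1,3)])
qed

text \<open>Testing \<open>v = e\<^sub>x + e\<^sub>y\<close> and \<open>v = e\<^sub>x + \<i> e\<^sub>y\<close> pins down the imaginary and the real part of
  \<open>A x y - cnj (A y x)\<close>.\<close>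
lemma psd_hermitian:
  assumes fin: "finite S" and P: "psd S A" and xy: "x \<in> S" "y \<in> S"
  shows "A x y = cnj (A y x)"
proof (cases "x = y")
  case True
  then show ?thesis using psd_diag_nonneg[OF fin P xy(1)] by (simp add: complex_eq_iff less_eq_complex_def)
next
  case False
  have diag: "Im (A x x) = 0" "Im (A y y) = 0"
    using psd_diag_nonneg[OF fin P] xy by (auto simp: less_eq_complex_def)
  have "0 \<le> quad_form S A (\<lambda>u. if u = x then 1 else if u = y then b else 0)" for b
    using P by (simp add: psd_iff_quad_form_nonneg)
  from this[of 1] this[of \<i>] have "Im (A x y) + Im (A y x) = 0" "Re (A x y) - Re (A y x) = 0"
    using diag unfolding quad_form_pair[OF fin xy False] by (auto simp: less_eq_complex_def)
  then show ?thesis by (simp add: complex_eq_iff)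
qed

lemma psd_subset:
  assumes "finite S" "T \<subseteq> S" "psd S A"
  shows "psd T A"
  unfolding psd_iff_quad_form_nonneg
proof
  fix v
  let ?w = "\<lambda>u. if u \<in> T then v u else (0::complex)"
  have "quad_form S A ?w = quad_form T A ?w" by (rule quad_form_mono_neutral) (use assms in auto)
  also have "\<dots> = quad_form T A v" by (rule quad_form_cong) auto
  finally show "0 \<le> quad_form T A v" using assms(3) unfolding psd_iff_quad_form_nonneg by metis
qed

lemma quad_form_add_point:
  assumes "finite S" "s \<in> S"
  shows "quad_form S A (\<lambda>u. v u + (if u = s then t else 0)) = quad_form S A v
     + t * (\<Sum>x\<in>S. cnj (v x) * A x s) + cnj t * (\<Sum>y\<in>S. A s y * v y) + cnj t * A s s * t"
proof -
  have "cnj (v x + (if x = s then t else 0)) * A x y * (v y + (if y = s then t else 0))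
     = cnj (v x) * A x y * v y + (if y = s then cnj (v x) * A x s * t else 0)
       + (if x = s then cnj t * A s y * v y else 0) + (if x = s then if y = s then cnj t * A s s * t else 0 else 0)"
    for x y by (auto simp: algebra_simps)
  moreover have "(\<Sum>y\<in>S. if P then f y else 0) = (if P then sum f S else 0)" for P and f :: "'a \<Rightarrow> complex"
    by simp
  ultimately show ?thesis
    unfolding quad_form_def using assms
    by (simp add: sum.distrib sum_distrib_left sum_distrib_right algebra_simps)
qed

text \<open>When \<open>A s s = 0\<close> this is \<open>A\<close> itself, as \<open>z / 0 = 0\<close>.\<close>
definition schur_compl :: "('a \<Rightarrow> 'a \<Rightarrow> complex) \<Rightarrow> 'a \<Rightarrow> 'a \<Rightarrow> 'a \<Rightarrow> complex" where
  "schur_compl A s = (\<lambda>x y. A x y - A x s * A s y / A s s)"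

text \<open>The quadratic form of the complement at \<open>v\<close> is that of \<open>A\<close> at \<open>v - ((A v) s / A s s) e\<^sub>s\<close>.\<close>
lemma psd_schur_compl:
  assumes fin: "finite S" and sS: "s \<in> S" and P: "psd S A"
  shows "psd S (schur_compl A s)"
proof (cases "A s s = 0")
  case True
  then show ?thesis using P by (simp add: schur_compl_def)
next
  case False
  have H: "\<And>x. x \<in> S \<Longrightarrow> A x s = cnj (A s x)" using psd_hermitian[OF fin P _ sS] by blast
  have real: "cnj (A s s) = A s s" using H[OF sS] by simp
  show ?thesis unfolding psd_iff_quad_form_nonneg
  proof
    fix v :: "'a \<Rightarrow> complex"
    define \<alpha> where "\<alpha> = (\<Sum>y\<in>S. A s y * v y)"
    have col: "(\<Sum>x\<in>S. cnj (v x) * A x s) = cnj \<alpha>"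
      unfolding \<alpha>_def by (simp add: H mult.commute)
    have "(\<Sum>x\<in>S. \<Sum>y\<in>S. (cnj (v x) * A x s) * (A s y * v y) / A s s)
        = (\<Sum>x\<in>S. cnj (v x) * A x s) * (\<Sum>y\<in>S. A s y * v y) / A s s"
      by (simp add: sum_distrib_left sum_distrib_right sum_divide_distrib, rule sum.swap)
    then have "quad_form S (schur_compl A s) v = quad_form S A v - cnj \<alpha> * \<alpha> / A s s"
      unfolding quad_form_def schur_compl_def col \<alpha>_def[symmetric] by (simp add: algebra_simps sum_subtractf)
    also have "\<dots> = quad_form S A (\<lambda>u. v u + (if u = s then - \<alpha> / A s s else 0))"
    proof -
      have "cnj (- \<alpha> / A s s) = - cnj \<alpha> / A s s" using real by simp
      then show ?thesis
        unfolding quad_form_add_point[OF fin sS] col \<alpha>_def[symmetric] using False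
        by (simp add: field_simps)
    qed
    finally show "0 \<le> quad_form S (schur_compl A s) v" using P unfolding psd_iff_quad_form_nonneg by metis
  qed
qed

lemma psd_zero_diag_imp_zero_row:
  assumes fin: "finite S" and P: "psd S A" and sS: "s \<in> S" and yS: "y \<in> S" and z: "A s s = 0"
  shows "A s y = 0"
proof (rule ccontr)
  assume ne: "A s y \<noteq> 0"
  then have sy: "s \<noteq> y" using z by auto
  define r where "r = (Re (A y y) + 1) / (2 * (cmod (A s y))\<^sup>2)"
  have "0 < (cmod (A s y))\<^sup>2" using ne by simp
  then have r: "2 * r * (cmod (A s y))\<^sup>2 = Re (A y y) + 1" unfolding r_def by simp
  define t where "t = - complex_of_real r * A s y"
  have "0 \<le> quad_form S A (\<lambda>u. if u = s then t else if u = y then 1 else 0)"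
    using P unfolding psd_iff_quad_form_nonneg ..
  then have "0 \<le> Re (cnj t * A s y + cnj (A s y) * t + A y y)"
    unfolding quad_form_pair[OF fin sS yS sy] psd_hermitian[OF fin P yS sS] z by (simp add: less_eq_complex_def)
  also have "\<dots> = Re (A y y) - 2 * r * (cmod (A s y))\<^sup>2"
    unfolding t_def cmod_power2 by (simp add: algebra_simps power2_eq_square)
  finally show False using r by simp
qed

lemma schur_compl_zero_row_col:
  assumes "finite S" "psd S A" "s \<in> S" "y \<in> S"
  shows "schur_compl A s s y = 0" "schur_compl A s y s = 0"
proof -
  have "A s y = 0 \<and> A y s = 0" if "A s s = 0"
    using psd_zero_diag_imp_zero_row[OF assms(1-4) that] psd_hermitian[OF assms(1,2,4,3)] by simp
  then show "schur_compl A s s y = 0" "schur_compl A s y s = 0"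
    unfolding schur_compl_def by (cases "A s s = 0"; simp)+
qed

text \<open>The removed rank-one part \<open>A x s * A s y / A s s\<close> is \<open>a x * cnj (a y)\<close> for the column
  \<open>a = A \<cdot> s / sqrt (A s s)\<close>.\<close>
lemma psd_schur_compl_rank_one:
  assumes fin: "finite S" and P: "psd S A" and sS: "s \<in> S"
  obtains a where "\<And>x y. x \<in> S \<Longrightarrow> y \<in> S \<Longrightarrow> A x y = schur_compl A s x y + a x * cnj (a y)"
proof
  define r where "r = complex_of_real (sqrt (Re (A s s)))"
  have "0 \<le> A s s" by (rule psd_diag_nonneg[OF fin P sS])
  then have "r * r = A s s" unfolding r_def by (simp add: less_eq_complex_def complex_eq_iff)
  moreover have "cnj r = r" unfolding r_def by simp
  moreover have "cnj (A y s) = A s y" if "y \<in> S" for y using psd_hermitian[OF fin P sS that] by simp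
  ultimately show "A x y = schur_compl A s x y + A x s / r * cnj (A y s / r)" if "x \<in> S" "y \<in> S" for x y
    using that unfolding schur_compl_def by simp
qed

lemma psd_gram:
  assumes "finite S" "psd S A"
  shows "\<exists>W (m::nat). \<forall>x\<in>S. \<forall>y\<in>S. A x y = (\<Sum>k<m. W k x * cnj (W k y))"
  using assms
proof (induction S arbitrary: A rule: finite_induct)
  case empty
  then show ?case by auto
next
  case (insert s S A)
  let ?S = "insert s S"
  have fin: "finite ?S" and sS: "s \<in> ?S" using insert.hyps by auto
  obtain a where a: "\<And>x y. x \<in> ?S \<Longrightarrow> y \<in> ?S \<Longrightarrow> A x y = schur_compl A s x y + a x * cnj (a y)"
    using psd_schur_compl_rank_one[OF fin insert.prems sS] by blast
  have "psd S (schur_compl A s)"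
    using psd_subset[OF fin _ psd_schur_compl[OF fin sS insert.prems]] by blast
  then obtain W and m :: nat where W: "\<forall>x\<in>S. \<forall>y\<in>S. schur_compl A s x y = (\<Sum>k<m. W k x * cnj (W k y))"
    using insert.IH by blast
  define W' where "W' k x = (if k = m then a x else if x = s then 0 else W k x)" for k x
  have "schur_compl A s x y = (\<Sum>k<m. W' k x * cnj (W' k y))" if "x \<in> ?S" "y \<in> ?S" for x y
  proof (cases "x = s \<or> y = s")
    case True
    then show ?thesis
      using that schur_compl_zero_row_col[OF fin insert.prems sS] unfolding W'_def by auto
  next
    case False
    then show ?thesis using that W insert.hyps(2) unfolding W'_def by auto
  qed
  then have "\<forall>x\<in>?S. \<forall>y\<in>?S. A x y = (\<Sum>k<Suc m. W' k x * cnj (W' k y))"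
    using a by (simp add: W'_def)
  then show ?case by blast
qed

lemma psd_rank_one: "psd S (\<lambda>x y. f x * cnj (f y))"
proof -
  have "quad_form S (\<lambda>x y. f x * cnj (f y)) v = (\<Sum>x\<in>S. cnj (v x) * f x) * cnj (\<Sum>x\<in>S. cnj (v x) * f x)" for v
    unfolding quad_form_def by (simp add: sum_product algebra_simps)
  then show ?thesis unfolding psd_iff_quad_form_nonneg complex_mult_cnj by (simp add: less_eq_complex_def)
qed

lemma quad_form_sum: "quad_form S (\<lambda>x y. \<Sum>i\<in>I. M i x y) v = (\<Sum>i\<in>I. quad_form S (M i) v)"
  unfolding quad_form_def
  by (simp add: sum_distrib_left sum_distrib_right, subst sum.swap, rule sum.cong[OF refl], subst sum.swap, rule refl)

lemma psd_sum:
  assumes "\<And>i. i \<in> I \<Longrightarrow> psd S (M i)"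
  shows "psd S (\<lambda>x y. \<Sum>i\<in>I. M i x y)"
  using assms unfolding psd_iff_quad_form_nonneg quad_form_sum by (blast intro: sum_nonneg)

lemma psd_scale:
  assumes "psd S A" "0 \<le> c"
  shows "psd S (\<lambda>x y. complex_of_real c * A x y)"
proof -
  have "quad_form S (\<lambda>x y. complex_of_real c * A x y) v = complex_of_real c * quad_form S A v" for v
    unfolding quad_form_def by (simp add: sum_distrib_left algebra_simps)
  then show ?thesis using assms unfolding psd_iff_quad_form_nonneg by (simp add: less_eq_complex_def)
qed

lemma psd_add:
  assumes "psd S A" "psd S B"
  shows "psd S (\<lambda>x y. A x y + B x y)"
proof -
  have "quad_form S (\<lambda>x y. A x y + B x y) v = quad_form S A v + quad_form S B v" for v
    unfolding quad_form_def by (simp add: sum.distrib algebra_simps)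
  then show ?thesis using assms unfolding psd_iff_quad_form_nonneg by (simp add: add_nonneg_nonneg)
qed

lemma psd_of_gram:
  assumes "\<And>x y. x \<in> S \<Longrightarrow> y \<in> S \<Longrightarrow> A x y = (\<Sum>k\<in>K. W k x * cnj (W k y))"
  shows "psd S A"
  using psd_cong[of S A, OF assms] psd_sum[where I = K and M = "\<lambda>k x y. W k x * cnj (W k y)", OF psd_rank_one] by blast

lemma psd_identity:
  assumes "finite S"
  shows "psd S (\<lambda>x y. if x = y then 1 else 0)"
proof (rule psd_of_gram[where K = S and W = "\<lambda>k x. if x = k then 1 else 0"])
  fix x y assume "x \<in> S" "y \<in> S"
  have "(\<Sum>k\<in>S. (if x = k then 1 else 0) * cnj (if y = k then 1 else 0))
      = (\<Sum>k\<in>S. if k = x then (if x = y then 1 else 0) else (0::complex))"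
    by (rule sum.cong) auto
  then show "(if x = y then 1 else 0) = (\<Sum>k\<in>S. (if x = k then 1 else 0) * cnj (if y = k then 1 else 0))"
    using assms \<open>x \<in> S\<close> by simp
qed

lemma psd_pullback:
  assumes "finite T" "psd T A" "g ` S \<subseteq> T"
  shows "psd S (\<lambda>x y. A (g x) (g y))"
proof -
  obtain W and m :: nat where "\<forall>x\<in>T. \<forall>y\<in>T. A x y = (\<Sum>k<m. W k x * cnj (W k y))"
    using psd_gram[OF assms(1,2)] by blast
  then show ?thesis
    using assms(3) by (intro psd_of_gram[where K = "{..<m}" and W = "\<lambda>k x. W k (g x)"]) auto
qed

lemma psd_mult:
  assumes "finite S" "psd S A" "psd S B"
  shows "psd S (\<lambda>x y. A x y * B x y)"
proof -
  obtain W and m :: nat where W: "\<forall>x\<in>S. \<forall>y\<in>S. A x y = (\<Sum>k<m. W k x * cnj (W k y))"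
    using psd_gram[OF assms(1,2)] by blast
  obtain V and l :: nat where V: "\<forall>x\<in>S. \<forall>y\<in>S. B x y = (\<Sum>j<l. V j x * cnj (V j y))"
    using psd_gram[OF assms(1,3)] by blast
  have "A x y * B x y = (\<Sum>kj\<in>{..<m} \<times> {..<l}. W (fst kj) x * V (snd kj) x * cnj (W (fst kj) y * V (snd kj) y))"
    if "x \<in> S" "y \<in> S" for x y
  proof -
    have "A x y * B x y = (\<Sum>k<m. W k x * cnj (W k y)) * (\<Sum>j<l. V j x * cnj (V j y))"
      using that W V by simp
    also have "\<dots> = (\<Sum>k<m. \<Sum>j<l. W k x * V j x * cnj (W k y * V j y))"
      unfolding sum_product by (intro sum.cong refl) (simp add: algebra_simps)
    finally show ?thesis by (simp add: sum.cartesian_product split_def)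
  qed
  then show ?thesis by (rule psd_of_gram)
qed

section \<open>Computational basis labels\<close>

lemma qbasis_0: "qbasis d 0 = {\<lambda>_. 0}"
  unfolding qbasis_def by auto

lemma bij_betw_qbasis_Suc: "bij_betw (\<lambda>(b, l). b(m := l)) (qbasis d m \<times> {..<d}) (qbasis d (Suc m))"
  by (rule bij_betw_byWitness[where f' = "\<lambda>b. (b(m := 0), b m)"])
     (auto simp: qbasis_def fun_eq_iff less_Suc_eq)

lemma sum_qbasis_Suc: "(\<Sum>b\<in>qbasis d (Suc m). f b) = (\<Sum>b\<in>qbasis d m. \<Sum>l<d. f (b(m := l)))"
  using sum.reindex_bij_betw[OF bij_betw_qbasis_Suc, of f] by (simp add: sum.cartesian_product split_def)

lemma finite_qbasis: "finite (qbasis d n)"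
  by (induction n) (simp_all add: qbasis_0 bij_betw_finite[OF bij_betw_qbasis_Suc, symmetric])

lemma card_qbasis: "card (qbasis d n) = d ^ n"
  by (induction n) (simp_all add: qbasis_0 bij_betw_same_card[OF bij_betw_qbasis_Suc, symmetric] card_cartesian_product)

lemma bij_betw_qbasis_upd:
  assumes "i < n"
  shows "bij_betw (\<lambda>(b, l). b(i := l)) ({b \<in> qbasis d n. b i = 0} \<times> {..<d}) (qbasis d n)"
  by (rule bij_betw_byWitness[where f' = "\<lambda>b. (b(i := 0), b i)"]) (use assms in \<open>auto simp: qbasis_def\<close>)

lemma sum_qbasis_upd:
  assumes "i < n"
  shows "(\<Sum>b\<in>qbasis d n. f b) = (\<Sum>b\<in>{b \<in> qbasis d n. b i = 0}. \<Sum>l<d. f (b(i := l)))"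
  using sum.reindex_bij_betw[OF bij_betw_qbasis_upd[OF assms], of f]
  by (simp add: sum.cartesian_product split_def)

lemma qbasis_upd: "b \<in> qbasis d n \<Longrightarrow> i < n \<Longrightarrow> l < d \<Longrightarrow> b(i := l) \<in> qbasis d n"
  unfolding qbasis_def by auto

type_synonym qmatrix = "(nat \<Rightarrow> nat) \<Rightarrow> (nat \<Rightarrow> nat) \<Rightarrow> complex"

definition restrict_prefix :: "nat \<Rightarrow> (nat \<Rightarrow> nat) \<Rightarrow> nat \<Rightarrow> nat" where
  "restrict_prefix m x = (\<lambda>k. if k < m then x k else 0)"

definition override_prefix :: "nat \<Rightarrow> (nat \<Rightarrow> nat) \<Rightarrow> (nat \<Rightarrow> nat) \<Rightarrow> nat \<Rightarrow> nat" where
  "override_prefix m z x = (\<lambda>k. if k < m then z k else x k)"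

lemma override_prefix_in_qbasis:
  "m \<le> n \<Longrightarrow> z \<in> qbasis d m \<Longrightarrow> x \<in> qbasis d n \<Longrightarrow> override_prefix m z x \<in> qbasis d n"
  unfolding qbasis_def override_prefix_def by auto

lemma override_prefix_override_prefix: "override_prefix m z (override_prefix m w x) = override_prefix m z x"
  unfolding override_prefix_def by auto

lemma bij_betw_override_prefix:
  assumes "m \<le> n"
  shows "bij_betw (\<lambda>(z, x). override_prefix m z x)
    (qbasis d m \<times> {x \<in> qbasis d n. \<forall>k<m. x k = 0}) (qbasis d n)"
  by (rule bij_betw_byWitness[where f' = "\<lambda>y. (restrict_prefix m y, override_prefix m (\<lambda>_. 0) y)"])
     (use assms in \<open>auto simp: qbasis_def override_prefix_def restrict_prefix_def fun_eq_iff\<close>)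

lemma sum_qbasis_override_prefix:
  assumes "m \<le> n"
  shows "(\<Sum>y\<in>qbasis d n. f y) = (\<Sum>z\<in>qbasis d m. \<Sum>x\<in>{x \<in> qbasis d n. \<forall>k<m. x k = 0}. f (override_prefix m z x))"
  using sum.reindex_bij_betw[OF bij_betw_override_prefix[OF assms], of f]
  by (simp add: sum.cartesian_product split_def)

text \<open>The first \<open>m\<close> qudits of \<open>A\<close> replaced by the maximally mixed state:
  \<open>(I/d)\<^sup>\<otimes>\<^sup>m \<otimes> Tr\<^sub><\<^sub>m A\<close>. These states interpolate between \<open>A\<close> (at \<open>m = 0\<close>) and the
  maximally mixed state (at \<open>m = n\<close>), and consecutive ones have equal partial traces over qudit \<open>m\<close>.\<close>
definition depolarize_prefix :: "nat \<Rightarrow> nat \<Rightarrow> qmatrix \<Rightarrow> qmatrix" where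
  "depolarize_prefix d m A = (\<lambda>x y. (if restrict_prefix m x = restrict_prefix m y then 1 else 0) *
      (complex_of_real (1 / real d ^ m) * (\<Sum>z\<in>qbasis d m. A (override_prefix m z x) (override_prefix m z y))))"

lemma psd_depolarize_prefix:
  assumes "m \<le> n" "psd (qbasis d n) A"
  shows "psd (qbasis d n) (depolarize_prefix d m A)"
proof -
  have "psd (qbasis d n) (\<lambda>x y. if restrict_prefix m x = restrict_prefix m y then 1 else 0)"
    by (rule psd_pullback[where T = "restrict_prefix m ` qbasis d n", OF _ psd_identity])
       (simp_all add: finite_qbasis)
  moreover have "psd (qbasis d n) (\<lambda>x y. complex_of_real (1 / real d ^ m) *
      (\<Sum>z\<in>qbasis d m. A (override_prefix m z x) (override_prefix m z y)))"
    using assms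
    by (intro psd_scale psd_sum psd_pullback[OF finite_qbasis assms(2)]) (auto intro: override_prefix_in_qbasis)
  ultimately show ?thesis unfolding depolarize_prefix_def by (rule psd_mult[OF finite_qbasis])
qed

lemma trace_depolarize_prefix:
  assumes "m \<le> n" "0 < d"
  shows "mtrace (qbasis d n) (depolarize_prefix d m A) = mtrace (qbasis d n) A"
proof -
  let ?Z = "{x \<in> qbasis d n. \<forall>k<m. x k = 0}"
  define G where "G x = (\<Sum>z\<in>qbasis d m. A (override_prefix m z x) (override_prefix m z x))" for x
  have "(\<Sum>x\<in>qbasis d n. G x) = (\<Sum>w\<in>qbasis d m. \<Sum>x\<in>?Z. G (override_prefix m w x))"
    by (rule sum_qbasis_override_prefix[OF assms(1)])
  also have "\<dots> = (\<Sum>w\<in>qbasis d m. \<Sum>x\<in>?Z. G x)"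
    unfolding G_def override_prefix_override_prefix ..
  also have "\<dots> = of_nat (d ^ m) * (\<Sum>x\<in>?Z. G x)"
    by (simp add: card_qbasis)
  also have "(\<Sum>x\<in>?Z. G x) = (\<Sum>z\<in>qbasis d m. \<Sum>x\<in>?Z. A (override_prefix m z x) (override_prefix m z x))"
    unfolding G_def by (rule sum.swap)
  also have "\<dots> = mtrace (qbasis d n) A"
    unfolding mtrace_def sum_qbasis_override_prefix[OF assms(1)] ..
  finally show ?thesis
    using assms(2) unfolding mtrace_def depolarize_prefix_def G_def[symmetric]
    by (simp add: sum_divide_distrib[symmetric])
qed

lemma depolarize_prefix_0: "depolarize_prefix d 0 A = A"
  unfolding depolarize_prefix_def restrict_prefix_def override_prefix_def by (simp add: qbasis_0)

lemma depolarize_prefix_all: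
  assumes "x \<in> qbasis d n" "y \<in> qbasis d n"
  shows "depolarize_prefix d n A x y = (if x = y then complex_of_real (1 / real d ^ n) else 0) * mtrace (qbasis d n) A"
proof -
  have "restrict_prefix n x = x" "restrict_prefix n y = y"
    using assms unfolding restrict_prefix_def qbasis_def by auto
  moreover have "override_prefix n z x = z" "override_prefix n z y = z" if "z \<in> qbasis d n" for z
    using assms that unfolding override_prefix_def qbasis_def by (auto simp: fun_eq_iff)
  ultimately show ?thesis unfolding depolarize_prefix_def mtrace_def by simp
qed

lemma ptr1_depolarize_prefix_Suc:
  assumes "0 < d"
  shows "ptr1 d m (depolarize_prefix d (Suc m) A) x y = ptr1 d m (depolarize_prefix d m A) x y"
proof -
  have r1: "restrict_prefix m (x(m := j)) = restrict_prefix m x" "restrict_prefix m (y(m := j)) = restrict_prefix m y" for j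
    unfolding restrict_prefix_def by auto
  have r2: "(restrict_prefix (Suc m) (x(m := j)) = restrict_prefix (Suc m) (y(m := j)))
      = (restrict_prefix m x = restrict_prefix m y)" for j
    unfolding restrict_prefix_def fun_eq_iff by (auto simp: less_Suc_eq)
  have o1: "override_prefix (Suc m) z (x(m := j)) = override_prefix (Suc m) z x"
      "override_prefix (Suc m) z (y(m := j)) = override_prefix (Suc m) z y" for z j
    unfolding override_prefix_def by auto
  have o2: "override_prefix (Suc m) (z(m := j)) x = override_prefix m z (x(m := j))"
      "override_prefix (Suc m) (z(m := j)) y = override_prefix m z (y(m := j))" for z j
    unfolding override_prefix_def by (auto simp: fun_eq_iff less_Suc_eq)
  define E where "E = (if restrict_prefix m x = restrict_prefix m y then 1 else (0::complex))"
  define F where "F = (\<Sum>j<d. \<Sum>z\<in>qbasis d m. A (override_prefix m z (x(m := j))) (override_prefix m z (y(m := j))))"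
  have "ptr1 d m (depolarize_prefix d (Suc m) A) x y = of_nat d * (E * (complex_of_real (1 / real d ^ Suc m) * F))"
    unfolding ptr1_def depolarize_prefix_def r2 o1 E_def F_def sum_qbasis_Suc o2
    by (simp add: sum.swap[of _ "{..<d}"])
  also have "\<dots> = ptr1 d m (depolarize_prefix d m A) x y"
    using assms unfolding ptr1_def depolarize_prefix_def r1 E_def F_def by (simp add: sum_distrib_left field_simps)
  finally show ?thesis .
qed

section \<open>Decompositions defining the Wasserstein distance\<close>

definition neighbours :: "nat \<Rightarrow> nat \<Rightarrow> nat \<Rightarrow> qmatrix \<Rightarrow> qmatrix \<Rightarrow> bool" where
  "neighbours d n i r s \<longleftrightarrow> qstate d n r \<and> qstate d n s \<and> ptr1_eq d n i r s"

definition W1_decomposition :: "nat \<Rightarrow> nat \<Rightarrow> qmatrix \<Rightarrow> (nat \<Rightarrow> real) \<Rightarrow> (nat \<Rightarrow> qmatrix) \<Rightarrow> (nat \<Rightarrow> qmatrix) \<Rightarrow> bool" where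
  "W1_decomposition d n X c rs ss \<longleftrightarrow> (\<forall>i<n. neighbours d n i (rs i) (ss i)) \<and>
     (\<forall>x\<in>qbasis d n. \<forall>y\<in>qbasis d n. X x y = (\<Sum>i<n. complex_of_real (c i) * (rs i x y - ss i x y)))"

definition W1_costs :: "nat \<Rightarrow> nat \<Rightarrow> qmatrix \<Rightarrow> real set" where
  "W1_costs d n X = {(\<Sum>i<n. \<bar>c i\<bar>) | c rs ss. W1_decomposition d n X c rs ss}"

lemma W1_eq_Inf_W1_costs: "W1 d n X = Inf (W1_costs d n X)"
  unfolding W1_def W1_costs_def W1_decomposition_def neighbours_def by meson

lemma bdd_below_W1_costs: "bdd_below (W1_costs d n X)"
  unfolding W1_costs_def by (rule bdd_belowI[of _ 0]) (auto intro: sum_nonneg)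

lemma W1_le_cost: "a \<in> W1_costs d n X \<Longrightarrow> W1 d n X \<le> a"
  unfolding W1_eq_Inf_W1_costs by (rule cInf_lower[OF _ bdd_below_W1_costs])

lemma W1_le_W1_if_costs_subset:
  assumes "W1_costs d n X \<noteq> {}" "W1_costs d n X \<subseteq> W1_costs d n Y"
  shows "W1 d n Y \<le> W1 d n X"
  unfolding W1_eq_Inf_W1_costs by (rule cInf_superset_mono[OF assms(1) bdd_below_W1_costs assms(2)])

definition mix :: "real \<Rightarrow> qmatrix \<Rightarrow> qmatrix \<Rightarrow> qmatrix" where
  "mix t A B = (\<lambda>x y. complex_of_real t * A x y + complex_of_real (1 - t) * B x y)"

lemma qstate_mix:
  assumes "qstate d n A" "qstate d n B" "0 \<le> t" "t \<le> 1"
  shows "qstate d n (mix t A B)"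
proof -
  have "psd (qbasis d n) (mix t A B)"
    using assms unfolding mix_def qstate_def by (intro psd_add psd_scale) auto
  moreover have "mtrace (qbasis d n) (mix t A B)
      = complex_of_real t * mtrace (qbasis d n) A + complex_of_real (1 - t) * mtrace (qbasis d n) B"
    unfolding mtrace_def mix_def by (simp add: sum.distrib sum_distrib_left)
  ultimately show ?thesis using assms unfolding qstate_def by (simp add: algebra_simps)
qed

lemma neighbours_mix:
  assumes "neighbours d n i r1 s1" "neighbours d n i r2 s2" "0 \<le> t" "t \<le> 1"
  shows "neighbours d n i (mix t r1 r2) (mix t s1 s2)"
proof -
  have "ptr1 d i (mix t A B) x y = complex_of_real t * ptr1 d i A x y + complex_of_real (1 - t) * ptr1 d i B x y"
    for A B x y unfolding ptr1_def mix_def by (simp add: sum.distrib sum_distrib_left)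
  then show ?thesis using assms unfolding neighbours_def ptr1_eq_def by (simp add: qstate_mix)
qed

lemma neighbours_refl: "qstate d n A \<Longrightarrow> neighbours d n i A A"
  unfolding neighbours_def ptr1_eq_def by simp

lemma neighbours_commute: "neighbours d n i r s \<longleftrightarrow> neighbours d n i s r"
  unfolding neighbours_def ptr1_eq_def by auto

text \<open>The telescoping decomposition through the states \<open>depolarize_prefix d i\<close> of \<open>\<rho>\<close> and \<open>\<tau>\<close>;
  the two telescopes are merged into one by mixing, at the price of the coefficient \<open>2\<close>.\<close>
lemma W1_costs_nonempty:
  assumes d: "0 < d" and \<rho>: "qstate d n \<rho>" and \<tau>: "qstate d n \<tau>"
  shows "W1_costs d n (mdiff \<rho> \<tau>) \<noteq> {}"
proof -
  let ?T = "depolarize_prefix d"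
  define rs where "rs i = mix (1/2) (?T i \<rho>) (?T (Suc i) \<tau>)" for i
  define ss where "ss i = mix (1/2) (?T (Suc i) \<rho>) (?T i \<tau>)" for i
  have state: "qstate d n (?T m A)" if "m \<le> n" "qstate d n A" for m A
    using that psd_depolarize_prefix trace_depolarize_prefix[OF _ d] unfolding qstate_def by auto
  have "W1_decomposition d n (mdiff \<rho> \<tau>) (\<lambda>_. 2) rs ss"
    unfolding W1_decomposition_def
  proof (intro conjI allI impI ballI)
    fix i assume "i < n"
    then have "neighbours d n i (?T i A) (?T (Suc i) A)" if "qstate d n A" for A
      using that state ptr1_depolarize_prefix_Suc[OF d] unfolding neighbours_def ptr1_eq_def by simp
    then show "neighbours d n i (rs i) (ss i)"
      unfolding rs_def ss_def using \<rho> \<tau> by (intro neighbours_mix) (auto simp: neighbours_commute)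
  next
    fix x y assume xy: "x \<in> qbasis d n" "y \<in> qbasis d n"
    have "(\<Sum>i<n. complex_of_real 2 * (rs i x y - ss i x y))
        = (\<Sum>i<n. (?T i \<rho> x y - ?T i \<tau> x y) - (?T (Suc i) \<rho> x y - ?T (Suc i) \<tau> x y))"
      unfolding rs_def ss_def mix_def by (intro sum.cong refl) (simp add: algebra_simps)
    also have "\<dots> = (?T 0 \<rho> x y - ?T 0 \<tau> x y) - (?T n \<rho> x y - ?T n \<tau> x y)"
      by (rule sum_lessThan_telescope')
    also have "\<dots> = mdiff \<rho> \<tau> x y"
      using \<rho> \<tau> unfolding depolarize_prefix_0 depolarize_prefix_all[OF xy] mdiff_def qstate_def by simp
    finally show "mdiff \<rho> \<tau> x y = (\<Sum>i<n. complex_of_real 2 * (rs i x y - ss i x y))" by simp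
  qed
  then show ?thesis unfolding W1_costs_def by blast
qed

lemma neighbours_abs_coeff:
  assumes "neighbours d n i r s"
  obtains r' s' where "neighbours d n i r' s'"
    "\<And>x y. complex_of_real c * (r x y - s x y) = complex_of_real \<bar>c\<bar> * (r' x y - s' x y)"
proof (cases "c \<ge> 0")
  case True
  then show ?thesis using assms that[of r s] by simp
next
  case False
  then show ?thesis using assms that[of s r] by (simp add: neighbours_commute algebra_simps)
qed

lemma neighbours_combine:
  assumes "neighbours d n i r1 s1" "neighbours d n i r2 s2"
  obtains R S where "neighbours d n i R S"
    "\<And>x y. complex_of_real c1 * (r1 x y - s1 x y) + complex_of_real c2 * (r2 x y - s2 x y)
      = complex_of_real (\<bar>c1\<bar> + \<bar>c2\<bar>) * (R x y - S x y)"
proof -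
  obtain r1' s1' where 1: "neighbours d n i r1' s1'"
    "\<And>x y. complex_of_real c1 * (r1 x y - s1 x y) = complex_of_real \<bar>c1\<bar> * (r1' x y - s1' x y)"
    using neighbours_abs_coeff[OF assms(1)] by blast
  obtain r2' s2' where 2: "neighbours d n i r2' s2'"
    "\<And>x y. complex_of_real c2 * (r2 x y - s2 x y) = complex_of_real \<bar>c2\<bar> * (r2' x y - s2' x y)"
    using neighbours_abs_coeff[OF assms(2)] by blast
  define C where "C = \<bar>c1\<bar> + \<bar>c2\<bar>"
  show ?thesis
  proof (cases "C = 0")
    case True
    then have "c1 = 0" "c2 = 0" unfolding C_def by auto
    then show ?thesis using that[OF 1(1)] by simp
  next
    case False
    define t where "t = \<bar>c1\<bar> / C"
    have "C > 0" using False unfolding C_def by simp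
    then have t: "0 \<le> t" "t \<le> 1" "C * t = \<bar>c1\<bar>" "C * (1 - t) = \<bar>c2\<bar>"
      unfolding t_def C_def by (auto simp: field_simps)
    have eq: "complex_of_real C * (mix t r1' r2' x y - mix t s1' s2' x y)
        = complex_of_real \<bar>c1\<bar> * (r1' x y - s1' x y) + complex_of_real \<bar>c2\<bar> * (r2' x y - s2' x y)" for x y
    proof -
      have "complex_of_real C * (mix t r1' r2' x y - mix t s1' s2' x y)
          = complex_of_real (C * t) * (r1' x y - s1' x y) + complex_of_real (C * (1 - t)) * (r2' x y - s2' x y)"
        unfolding mix_def by (simp add: algebra_simps)
      then show ?thesis unfolding t(3,4) .
    qed
    show ?thesis
      by (rule that[OF neighbours_mix[OF 1(1) 2(1) t(1,2)]]) (use eq 1(2) 2(2) in \<open>simp add: C_def\<close>)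
  qed
qed

lemma W1_costs_add:
  assumes "a \<in> W1_costs d n X1" "b \<in> W1_costs d n X2"
    and X: "\<And>x y. x \<in> qbasis d n \<Longrightarrow> y \<in> qbasis d n \<Longrightarrow> X x y = X1 x y + X2 x y"
  shows "a + b \<in> W1_costs d n X"
proof -
  obtain c1 rs1 ss1 where a: "a = (\<Sum>i<n. \<bar>c1 i\<bar>)" and 1: "W1_decomposition d n X1 c1 rs1 ss1"
    using assms(1) unfolding W1_costs_def by blast
  obtain c2 rs2 ss2 where b: "b = (\<Sum>i<n. \<bar>c2 i\<bar>)" and 2: "W1_decomposition d n X2 c2 rs2 ss2"
    using assms(2) unfolding W1_costs_def by blast
  have "\<exists>RS. i < n \<longrightarrow> neighbours d n i (fst RS) (snd RS) \<and> (\<forall>x y.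
      complex_of_real (c1 i) * (rs1 i x y - ss1 i x y) + complex_of_real (c2 i) * (rs2 i x y - ss2 i x y)
      = complex_of_real (\<bar>c1 i\<bar> + \<bar>c2 i\<bar>) * (fst RS x y - snd RS x y))" for i
  proof (cases "i < n")
    case True
    then have "neighbours d n i (rs1 i) (ss1 i)" "neighbours d n i (rs2 i) (ss2 i)"
      using 1 2 unfolding W1_decomposition_def by auto
    then obtain R S where "neighbours d n i R S" "\<And>x y. complex_of_real (c1 i) * (rs1 i x y - ss1 i x y)
        + complex_of_real (c2 i) * (rs2 i x y - ss2 i x y) = complex_of_real (\<bar>c1 i\<bar> + \<bar>c2 i\<bar>) * (R x y - S x y)"
      by (rule neighbours_combine[of d n i _ _ _ _ "c1 i" "c2 i"]) blast
    then show ?thesis by (intro exI[of _ "(R, S)"]) simp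
  qed simp
  then have "\<forall>i. \<exists>RS. i < n \<longrightarrow> neighbours d n i (fst RS) (snd RS) \<and> (\<forall>x y.
      complex_of_real (c1 i) * (rs1 i x y - ss1 i x y) + complex_of_real (c2 i) * (rs2 i x y - ss2 i x y)
      = complex_of_real (\<bar>c1 i\<bar> + \<bar>c2 i\<bar>) * (fst RS x y - snd RS x y))" by blast
  from choice[OF this] obtain RS where RS: "\<forall>i. i < n \<longrightarrow> neighbours d n i (fst (RS i)) (snd (RS i)) \<and>
      (\<forall>x y. complex_of_real (c1 i) * (rs1 i x y - ss1 i x y) + complex_of_real (c2 i) * (rs2 i x y - ss2 i x y)
      = complex_of_real (\<bar>c1 i\<bar> + \<bar>c2 i\<bar>) * (fst (RS i) x y - snd (RS i) x y))"
    by blast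
  define R S where "R i = fst (RS i)" and "S i = snd (RS i)" for i
  have dec: "W1_decomposition d n X (\<lambda>i. \<bar>c1 i\<bar> + \<bar>c2 i\<bar>) R S"
    unfolding W1_decomposition_def
  proof (intro conjI allI impI ballI)
    fix x y assume "x \<in> qbasis d n" "y \<in> qbasis d n"
    then have "X x y = (\<Sum>i<n. complex_of_real (c1 i) * (rs1 i x y - ss1 i x y))
        + (\<Sum>i<n. complex_of_real (c2 i) * (rs2 i x y - ss2 i x y))"
      using X 1 2 unfolding W1_decomposition_def by simp
    then show "X x y = (\<Sum>i<n. complex_of_real (\<bar>c1 i\<bar> + \<bar>c2 i\<bar>) * (R i x y - S i x y))"
      unfolding sum.distrib[symmetric] R_def S_def using RS by simp
  qed (use RS in \<open>simp add: R_def S_def\<close>)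
  have "a + b = (\<Sum>i<n. \<bar>\<bar>c1 i\<bar> + \<bar>c2 i\<bar>\<bar>)"
    unfolding a b by (simp add: sum.distrib)
  then show ?thesis unfolding W1_costs_def mem_Collect_eq using dec by (intro exI conjI)
qed

lemma W1_triangle:
  assumes "W1_costs d n X1 \<noteq> {}" "W1_costs d n X2 \<noteq> {}"
    and "\<And>x y. x \<in> qbasis d n \<Longrightarrow> y \<in> qbasis d n \<Longrightarrow> X x y = X1 x y + X2 x y"
  shows "W1 d n X \<le> W1 d n X1 + W1 d n X2"
proof -
  have "W1 d n X - b \<le> W1 d n X1" if "b \<in> W1_costs d n X2" for b
    unfolding W1_eq_Inf_W1_costs[of d n X1]
  proof (rule cInf_greatest[OF assms(1)])
    fix a assume "a \<in> W1_costs d n X1"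
    then show "W1 d n X - b \<le> a" using W1_le_cost[OF W1_costs_add[OF _ that assms(3)]] by fastforce
  qed
  then have "W1 d n X - W1 d n X1 \<le> W1 d n X2"
    unfolding W1_eq_Inf_W1_costs[of d n X2] by (intro cInf_greatest[OF assms(2)]) (simp add: algebra_simps)
  then show ?thesis by simp
qed

text \<open>The kernel form makes \<open>\<Phi>\<close> linear, so applying it termwise to a decomposition of \<open>\<rho> - \<tau>\<close>
  gives a decomposition of \<open>\<Phi> \<rho> - \<Phi> \<tau>\<close> of the same cost.\<close>
lemma W1_le_if_preserves_neighbours:
  fixes \<Phi> :: "qmatrix \<Rightarrow> qmatrix"
  assumes d: "0 < d" and \<rho>: "qstate d n \<rho>" and \<tau>: "qstate d n \<tau>"
    and neighbours: "\<And>i r s. i < n \<Longrightarrow> neighbours d n i r s \<Longrightarrow> neighbours d n i (\<Phi> r) (\<Phi> s)"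
    and kernel: "\<And>A x y. x \<in> qbasis d n \<Longrightarrow> y \<in> qbasis d n \<Longrightarrow> \<Phi> A x y = (\<Sum>b\<in>T. F x y b * A (f x b) (f y b))"
    and f: "\<And>x b. x \<in> qbasis d n \<Longrightarrow> b \<in> T \<Longrightarrow> f x b \<in> qbasis d n"
  shows "W1 d n (mdiff (\<Phi> \<rho>) (\<Phi> \<tau>)) \<le> W1 d n (mdiff \<rho> \<tau>)"
proof (rule W1_le_W1_if_costs_subset[OF W1_costs_nonempty[OF d \<rho> \<tau>]], rule subsetI)
  fix a assume "a \<in> W1_costs d n (mdiff \<rho> \<tau>)"
  then obtain c rs ss where a: "a = (\<Sum>i<n. \<bar>c i\<bar>)" and dec: "W1_decomposition d n (mdiff \<rho> \<tau>) c rs ss"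
    unfolding W1_costs_def by blast
  have "W1_decomposition d n (mdiff (\<Phi> \<rho>) (\<Phi> \<tau>)) c (\<lambda>i. \<Phi> (rs i)) (\<lambda>i. \<Phi> (ss i))"
    unfolding W1_decomposition_def
  proof (intro conjI allI impI ballI)
    fix i assume "i < n"
    then show "neighbours d n i (\<Phi> (rs i)) (\<Phi> (ss i))"
      using dec neighbours unfolding W1_decomposition_def by blast
  next
    fix x y assume xy: "x \<in> qbasis d n" "y \<in> qbasis d n"
    have "mdiff (\<Phi> \<rho>) (\<Phi> \<tau>) x y = (\<Sum>b\<in>T. F x y b * mdiff \<rho> \<tau> (f x b) (f y b))"
      unfolding mdiff_def kernel[OF xy] by (simp add: sum_subtractf algebra_simps)
    also have "\<dots> = (\<Sum>b\<in>T. \<Sum>i<n. complex_of_real (c i) * (F x y b * (rs i (f x b) (f y b) - ss i (f x b) (f y b))))"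
      using dec f xy unfolding W1_decomposition_def by (intro sum.cong refl) (simp add: sum_distrib_left algebra_simps)
    also have "\<dots> = (\<Sum>i<n. complex_of_real (c i) * (\<Phi> (rs i) x y - \<Phi> (ss i) x y))"
      unfolding kernel[OF xy] by (subst sum.swap) (simp add: sum_distrib_left sum_subtractf algebra_simps)
    finally show "mdiff (\<Phi> \<rho>) (\<Phi> \<tau>) x y = (\<Sum>i<n. complex_of_real (c i) * (\<Phi> (rs i) x y - \<Phi> (ss i) x y))" .
  qed
  then show "a \<in> W1_costs d n (mdiff (\<Phi> \<rho>) (\<Phi> \<tau>))" unfolding W1_costs_def a by blast
qed

section \<open>Convolution with the key unitary\<close>

definition lin_mod :: "nat \<Rightarrow> int \<Rightarrow> int \<Rightarrow> nat \<Rightarrow> nat \<Rightarrow> nat" where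
  "lin_mod d a b j l = nat ((a * int j + b * int l) mod int d)"

lemma lincomb_eq_lin_mod: "lincomb d a b x y = (\<lambda>k. lin_mod d a b (x k) (y k))"
  unfolding lincomb_def lin_mod_def ..

lemma lin_mod_less: "0 < d \<Longrightarrow> lin_mod d a b j l < d"
  unfolding lin_mod_def by (simp add: nat_less_iff)

lemma lin_mod_lin_mod:
  assumes "0 < d"
  shows "lin_mod d p q (lin_mod d a b j l) (lin_mod d c e j l) = lin_mod d (p * a + q * c) (p * b + q * e) j l"
proof -
  have "(p * ((a * int j + b * int l) mod int d) + q * ((c * int j + e * int l) mod int d)) mod int d
      = (p * (a * int j + b * int l) + q * (c * int j + e * int l)) mod int d"
    by (rule mod_add_cong; simp add: mod_mult_right_eq)
  then show ?thesis using assms unfolding lin_mod_def by (simp add: algebra_simps)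
qed

lemma lin_mod_cong:
  assumes "a mod int d = a' mod int d" "b mod int d = b' mod int d"
  shows "lin_mod d a b j l = lin_mod d a' b' j l"
proof -
  have "(a * int j + b * int l) mod int d = (a' * int j + b' * int l) mod int d"
    using assms by (metis mod_add_cong mod_mult_left_eq)
  then show ?thesis unfolding lin_mod_def by simp
qed

lemma lin_mod_1_0: "j < d \<Longrightarrow> lin_mod d 1 0 j l = j"
  and lin_mod_0_1: "l < d \<Longrightarrow> lin_mod d 0 1 j l = l"
  unfolding lin_mod_def by simp_all

lemma qbasis_less: "0 < d \<Longrightarrow> x \<in> qbasis d n \<Longrightarrow> x k < d"
  unfolding qbasis_def by (cases "k < n") auto

lemma lincomb_in_qbasis: "0 < d \<Longrightarrow> x \<in> qbasis d n \<Longrightarrow> y \<in> qbasis d n \<Longrightarrow> lincomb d a b x y \<in> qbasis d n"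
  unfolding qbasis_def lincomb_eq_lin_mod using lin_mod_less by (auto simp: lin_mod_def)

lemma lincomb_upd: "lincomb d a b (x(i := j)) (y(i := l)) = (lincomb d a b x y)(i := lin_mod d a b j l)"
  unfolding lincomb_eq_lin_mod by auto

lemma inv_modd:
  assumes "prime d" "\<not> int d dvd D"
  shows "(D * inv_modd d D) mod int d = 1"
proof -
  have "coprime (int d) D" using prime_imp_coprime[of "int d" D] assms by simp
  then obtain u v where uv: "u * D + v * int d = 1"
    using bezout_int[of D "int d"] by (auto simp: coprime_iff_gcd_eq_1 gcd.commute)
  have d1: "1 < int d" using prime_gt_1_nat[OF assms(1)] by simp
  have "(D * (u mod int d)) mod int d = (u * D + v * int d) mod int d"
    by (simp add: mod_simps algebra_simps)
  then have "(D * (u mod int d)) mod int d = 1" using uv d1 by simp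
  then have "\<exists>b. 0 \<le> b \<and> b < int d \<and> (D * b) mod int d = 1" using d1 by (intro exI[of _ "u mod int d"]) auto
  from someI_ex[OF this] show ?thesis unfolding inv_modd_def by blast
qed

locale conv_setting =
  fixes d n :: nat and g00 g01 g10 g11 :: int
  assumes prime: "prime d" and det: "det2 g00 g01 g10 g11 mod int d \<noteq> 0"
begin

lemma d_pos: "0 < d"
  using prime_gt_0_nat[OF prime] .

definition N :: int where "N = inv_modd d (det2 g00 g01 g10 g11)"

text \<open>\<open>qudit_map\<close> is \<open>G\<^sup>T\<close> acting on one pair of qudit labels; \<open>qudit_map_inv\<close> is its inverse
  \<open>N adj(G\<^sup>T)\<close>, which is the map performed by the key unitary on each pair of qudits.\<close>
definition qudit_map :: "nat \<times> nat \<Rightarrow> nat \<times> nat" where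
  "qudit_map jl = (lin_mod d g00 g10 (fst jl) (snd jl), lin_mod d g01 g11 (fst jl) (snd jl))"

definition qudit_map_inv :: "nat \<times> nat \<Rightarrow> nat \<times> nat" where
  "qudit_map_inv jl = (lin_mod d (N * g11) (- N * g10) (fst jl) (snd jl),
                       lin_mod d (- N * g01) (N * g00) (fst jl) (snd jl))"

lemma det_N_mod: "(N * det2 g00 g01 g10 g11) mod int d = 1 mod int d"
  unfolding N_def using inv_modd[OF prime] det prime_gt_1_nat[OF prime] by (simp add: dvd_eq_mod_eq_0 mult.commute)

lemma qudit_map_inv_qudit_map:
  assumes "j < d" "l < d"
  shows "qudit_map_inv (qudit_map (j, l)) = (j, l)"
proof -
  have "lin_mod d (N * g11 * g00 + - N * g10 * g01) (N * g11 * g10 + - N * g10 * g11) j l = lin_mod d 1 0 j l"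
    by (rule lin_mod_cong) (use det_N_mod in \<open>simp_all add: det2_def algebra_simps\<close>)
  moreover have "lin_mod d (- N * g01 * g00 + N * g00 * g01) (- N * g01 * g10 + N * g00 * g11) j l = lin_mod d 0 1 j l"
    by (rule lin_mod_cong) (use det_N_mod in \<open>simp_all add: det2_def algebra_simps\<close>)
  ultimately show ?thesis
    using assms unfolding qudit_map_def qudit_map_inv_def by (simp add: lin_mod_lin_mod[OF d_pos] lin_mod_1_0 lin_mod_0_1)
qed

lemma qudit_map_qudit_map_inv:
  assumes "j < d" "l < d"
  shows "qudit_map (qudit_map_inv (j, l)) = (j, l)"
proof -
  have "lin_mod d (g00 * (N * g11) + g10 * (- N * g01)) (g00 * (- N * g10) + g10 * (N * g00)) j l = lin_mod d 1 0 j l"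
    by (rule lin_mod_cong) (use det_N_mod in \<open>simp_all add: det2_def algebra_simps\<close>)
  moreover have "lin_mod d (g01 * (N * g11) + g11 * (- N * g01)) (g01 * (- N * g10) + g11 * (N * g00)) j l = lin_mod d 0 1 j l"
    by (rule lin_mod_cong) (use det_N_mod in \<open>simp_all add: det2_def algebra_simps\<close>)
  ultimately show ?thesis
    using assms unfolding qudit_map_def qudit_map_inv_def by (simp add: lin_mod_lin_mod[OF d_pos] lin_mod_1_0 lin_mod_0_1)
qed

lemma bij_betw_qudit_map: "bij_betw qudit_map ({..<d} \<times> {..<d}) ({..<d} \<times> {..<d})"
proof (rule bij_betw_byWitness[where f' = qudit_map_inv])
  show "\<forall>jl\<in>{..<d} \<times> {..<d}. qudit_map_inv (qudit_map jl) = jl"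
    by (auto simp: qudit_map_inv_qudit_map)
  show "\<forall>jl\<in>{..<d} \<times> {..<d}. qudit_map (qudit_map_inv jl) = jl"
    by (auto simp: qudit_map_qudit_map_inv)
qed (auto simp: qudit_map_def qudit_map_inv_def lin_mod_less d_pos)

abbreviation UM :: "(nat \<Rightarrow> nat) \<times> (nat \<Rightarrow> nat) \<Rightarrow> (nat \<Rightarrow> nat) \<times> (nat \<Rightarrow> nat)" where
  "UM \<equiv> Umap d g00 g01 g10 g11"
abbreviation conv :: "qmatrix \<Rightarrow> qmatrix \<Rightarrow> qmatrix" where
  "conv \<equiv> qconv d n g00 g01 g10 g11"
abbreviation src1 :: "(nat \<Rightarrow> nat) \<Rightarrow> (nat \<Rightarrow> nat) \<Rightarrow> nat \<Rightarrow> nat" where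
  "src1 a b \<equiv> lincomb d g00 g10 a b"
abbreviation src2 :: "(nat \<Rightarrow> nat) \<Rightarrow> (nat \<Rightarrow> nat) \<Rightarrow> nat \<Rightarrow> nat" where
  "src2 a b \<equiv> lincomb d g01 g11 a b"

definition Umap_inv :: "(nat \<Rightarrow> nat) \<times> (nat \<Rightarrow> nat) \<Rightarrow> (nat \<Rightarrow> nat) \<times> (nat \<Rightarrow> nat)" where
  "Umap_inv p = (src1 (fst p) (snd p), src2 (fst p) (snd p))"

lemma Umap_inv_apply: "(fst (Umap_inv p) k, snd (Umap_inv p) k) = qudit_map (fst p k, snd p k)"
  unfolding Umap_inv_def qudit_map_def lincomb_eq_lin_mod by simp

lemma Umap_apply: "(fst (UM p) k, snd (UM p) k) = qudit_map_inv (fst p k, snd p k)"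
  unfolding Umap_def Let_def qudit_map_inv_def lincomb_eq_lin_mod N_def by simp

lemma Umap_inv_in: "p \<in> qbasis d n \<times> qbasis d n \<Longrightarrow> Umap_inv p \<in> qbasis d n \<times> qbasis d n"
  unfolding Umap_inv_def by (auto intro: lincomb_in_qbasis[OF d_pos])

lemma Umap_in: "p \<in> qbasis d n \<times> qbasis d n \<Longrightarrow> UM p \<in> qbasis d n \<times> qbasis d n"
  unfolding Umap_def Let_def by (auto intro: lincomb_in_qbasis[OF d_pos])

lemma Umap_Umap_inv:
  assumes "p \<in> qbasis d n \<times> qbasis d n"
  shows "UM (Umap_inv p) = p"
proof -
  have "(fst (UM (Umap_inv p)) k, snd (UM (Umap_inv p)) k) = (fst p k, snd p k)" for k
    using assms unfolding Umap_apply Umap_inv_apply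
    by (auto simp: qudit_map_inv_qudit_map qbasis_less[OF d_pos])
  then show ?thesis by (simp add: prod_eq_iff fun_eq_iff)
qed

lemma Umap_inv_Umap:
  assumes "p \<in> qbasis d n \<times> qbasis d n"
  shows "Umap_inv (UM p) = p"
proof -
  have "(fst (Umap_inv (UM p)) k, snd (Umap_inv (UM p)) k) = (fst p k, snd p k)" for k
    using assms unfolding Umap_apply Umap_inv_apply
    by (auto simp: qudit_map_qudit_map_inv qbasis_less[OF d_pos])
  then show ?thesis by (simp add: prod_eq_iff fun_eq_iff)
qed

lemma bij_betw_Umap_inv: "bij_betw Umap_inv (qbasis d n \<times> qbasis d n) (qbasis d n \<times> qbasis d n)"
  by (rule bij_betw_byWitness[where f' = UM]) (use Umap_Umap_inv Umap_inv_Umap Umap_inv_in Umap_in in blast)+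

text \<open>\<open>Umat\<close> is the permutation matrix of \<open>UM\<close>, so conjugating by it relabels rows and columns.\<close>
lemma Umat_conj:
  assumes "p \<in> qbasis d n \<times> qbasis d n" "q \<in> qbasis d n \<times> qbasis d n"
  shows "mmul (qbasis d n \<times> qbasis d n) (mmul (qbasis d n \<times> qbasis d n) (Umat d g00 g01 g10 g11) T)
      (adj (Umat d g00 g01 g10 g11)) p q = T (Umap_inv p) (Umap_inv q)"
proof -
  let ?S = "qbasis d n \<times> qbasis d n"
  have pick: "(\<Sum>z\<in>?S. (if r = UM z then 1 else 0) * F z) = (F (Umap_inv r) :: complex)"
    if r: "r \<in> ?S" for r F
  proof -
    have "(\<Sum>z\<in>?S. (if r = UM z then 1 else 0) * F z) = (\<Sum>z\<in>?S. if z = Umap_inv r then F z else 0)"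
    proof (rule sum.cong[OF refl])
      fix z assume "z \<in> ?S"
      then have "r = UM z \<longleftrightarrow> z = Umap_inv r" using Umap_Umap_inv[OF r] Umap_inv_Umap by auto
      then show "(if r = UM z then 1 else 0) * F z = (if z = Umap_inv r then F z else 0)" by simp
    qed
    then show ?thesis using Umap_inv_in[OF r] by (simp add: finite_qbasis)
  qed
  have "mmul ?S (mmul ?S (Umat d g00 g01 g10 g11) T) (adj (Umat d g00 g01 g10 g11)) p q
      = (\<Sum>z\<in>?S. (if q = UM z then 1 else 0) * T (Umap_inv p) z)"
    unfolding mmul_def adj_def Umat_def pick[OF assms(1)] by (intro sum.cong refl) (simp add: mult.commute)
  also have "\<dots> = T (Umap_inv p) (Umap_inv q)" by (rule pick[OF assms(2)])
  finally show ?thesis .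
qed

lemma qconv_eq:
  assumes "a \<in> qbasis d n" "a' \<in> qbasis d n"
  shows "conv A B a a' = (\<Sum>b\<in>qbasis d n. A (src1 a b) (src1 a' b) * B (src2 a b) (src2 a' b))"
  unfolding qconv_def Let_def ptrB_def using assms
  by (intro sum.cong refl) (simp add: Umat_conj Umap_inv_def tensor_def)

lemma qstate_qconv:
  assumes A: "qstate d n A" and B: "qstate d n B"
  shows "qstate d n (conv A B)"
proof -
  let ?Q = "qbasis d n"
  have "psd ?Q (\<lambda>a a'. \<Sum>b\<in>?Q. A (src1 a b) (src1 a' b) * B (src2 a b) (src2 a' b))"
  proof (rule psd_sum, rule psd_mult[OF finite_qbasis])
    fix b assume "b \<in> ?Q"
    then show "psd ?Q (\<lambda>a a'. A (src1 a b) (src1 a' b))" "psd ?Q (\<lambda>a a'. B (src2 a b) (src2 a' b))"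
      using A B lincomb_in_qbasis[OF d_pos] unfolding qstate_def
      by (intro psd_pullback[OF finite_qbasis, where g = "\<lambda>a. src1 a b"]
          psd_pullback[OF finite_qbasis, where g = "\<lambda>a. src2 a b"]; blast)+
  qed
  then have "psd ?Q (conv A B)" by (subst psd_cong[OF qconv_eq])
  moreover have "mtrace ?Q (conv A B) = mtrace ?Q A * mtrace ?Q B"
  proof -
    let ?f = "\<lambda>p. A (fst p) (fst p) * B (snd p) (snd p)"
    have "mtrace ?Q (conv A B) = (\<Sum>p\<in>?Q \<times> ?Q. ?f (Umap_inv p))"
      unfolding mtrace_def by (simp add: qconv_eq sum.cartesian_product Umap_inv_def split_def)
    also have "\<dots> = (\<Sum>p\<in>?Q \<times> ?Q. ?f p)"
      by (rule sum.reindex_bij_betw[OF bij_betw_Umap_inv])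
    finally show ?thesis unfolding mtrace_def by (simp add: sum.cartesian_product sum_product split_def)
  qed
  ultimately show ?thesis using A B unfolding qstate_def by simp
qed

text \<open>The key unitary acts on each pair of \<open>i\<close>-th qudits separately, so tracing out the \<open>i\<close>-th output
  qudit amounts to tracing out the \<open>i\<close>-th qudit of both inputs.\<close>
lemma ptr1_qconv:
  assumes i: "i < n" and a: "a \<in> qbasis d n" "a' \<in> qbasis d n"
  shows "ptr1 d i (conv A B) a a' = (\<Sum>b\<in>{b \<in> qbasis d n. b i = 0}.
      ptr1 d i A (src1 a b) (src1 a' b) * ptr1 d i B (src2 a b) (src2 a' b))"
proof -
  let ?Z = "{b \<in> qbasis d n. b i = 0}"
  define G where "G b pq = A ((src1 a b)(i := fst pq)) ((src1 a' b)(i := fst pq))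
      * B ((src2 a b)(i := snd pq)) ((src2 a' b)(i := snd pq))" for b pq
  have "ptr1 d i (conv A B) a a'
      = (\<Sum>j<d. \<Sum>b\<in>qbasis d n. A (src1 (a(i := j)) b) (src1 (a'(i := j)) b) * B (src2 (a(i := j)) b) (src2 (a'(i := j)) b))"
    unfolding ptr1_def using qbasis_upd[OF a(1) i] qbasis_upd[OF a(2) i] by (intro sum.cong refl) (simp add: qconv_eq)
  also have "\<dots> = (\<Sum>j<d. \<Sum>b\<in>?Z. \<Sum>l<d. G b (qudit_map (j, l)))"
    unfolding sum_qbasis_upd[OF i] G_def qudit_map_def lincomb_upd by simp
  also have "\<dots> = (\<Sum>b\<in>?Z. \<Sum>jl\<in>{..<d} \<times> {..<d}. G b (qudit_map jl))"
    by (subst sum.swap) (simp add: sum.cartesian_product split_def)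
  also have "\<dots> = (\<Sum>b\<in>?Z. \<Sum>pq\<in>{..<d} \<times> {..<d}. G b pq)"
    by (intro sum.cong refl sum.reindex_bij_betw[OF bij_betw_qudit_map])
  also have "\<dots> = (\<Sum>b\<in>?Z. ptr1 d i A (src1 a b) (src1 a' b) * ptr1 d i B (src2 a b) (src2 a' b))"
    unfolding ptr1_def G_def by (simp add: sum.cartesian_product sum_product split_def)
  finally show ?thesis .
qed

lemma neighbours_qconv:
  assumes i: "i < n" and A: "neighbours d n i A1 A2" and B: "neighbours d n i B1 B2"
  shows "neighbours d n i (conv A1 B1) (conv A2 B2)"
proof -
  have "ptr1 d i (conv A1 B1) a a' = ptr1 d i (conv A2 B2) a a'" if a: "a \<in> qbasis d n" "a' \<in> qbasis d n" for a a'
  proof -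
    have "ptr1 d i A1 (src1 a b) (src1 a' b) = ptr1 d i A2 (src1 a b) (src1 a' b)"
      "ptr1 d i B1 (src2 a b) (src2 a' b) = ptr1 d i B2 (src2 a b) (src2 a' b)" if "b \<in> qbasis d n" for b
    proof -
      have "src1 a b \<in> qbasis d n" "src1 a' b \<in> qbasis d n" "src2 a b \<in> qbasis d n" "src2 a' b \<in> qbasis d n"
        using a that by (simp_all add: lincomb_in_qbasis[OF d_pos])
      then show "ptr1 d i A1 (src1 a b) (src1 a' b) = ptr1 d i A2 (src1 a b) (src1 a' b)"
        "ptr1 d i B1 (src2 a b) (src2 a' b) = ptr1 d i B2 (src2 a b) (src2 a' b)"
        using A B unfolding neighbours_def ptr1_eq_def by simp_all
    qed
    then show ?thesis unfolding ptr1_qconv[OF i a] by (intro sum.cong refl) simp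
  qed
  then show ?thesis using A B qstate_qconv unfolding neighbours_def ptr1_eq_def by blast
qed

lemma W1_qconv_right_le:
  assumes "qstate d n \<sigma>" "qstate d n \<rho>" "qstate d n \<tau>"
  shows "W1 d n (mdiff (conv \<sigma> \<rho>) (conv \<sigma> \<tau>)) \<le> W1 d n (mdiff \<rho> \<tau>)"
proof (rule W1_le_if_preserves_neighbours[OF d_pos assms(2,3)])
  show "neighbours d n i (conv \<sigma> r) (conv \<sigma> s)" if "i < n" "neighbours d n i r s" for i r s
    using neighbours_qconv[OF that(1) neighbours_refl[OF assms(1)] that(2)] .
  show "conv \<sigma> A x y = (\<Sum>b\<in>qbasis d n. \<sigma> (src1 x b) (src1 y b) * A (src2 x b) (src2 y b))"
    if "x \<in> qbasis d n" "y \<in> qbasis d n" for A x y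
    using that by (rule qconv_eq)
qed (simp add: lincomb_in_qbasis[OF d_pos])

lemma W1_qconv_left_le:
  assumes "qstate d n \<sigma>" "qstate d n \<rho>" "qstate d n \<tau>"
  shows "W1 d n (mdiff (conv \<rho> \<sigma>) (conv \<tau> \<sigma>)) \<le> W1 d n (mdiff \<rho> \<tau>)"
proof (rule W1_le_if_preserves_neighbours[OF d_pos assms(2,3)])
  show "neighbours d n i (conv r \<sigma>) (conv s \<sigma>)" if "i < n" "neighbours d n i r s" for i r s
    using neighbours_qconv[OF that neighbours_refl[OF assms(1)]] .
  show "conv A \<sigma> x y = (\<Sum>b\<in>qbasis d n. \<sigma> (src2 x b) (src2 y b) * A (src1 x b) (src1 y b))"
    if "x \<in> qbasis d n" "y \<in> qbasis d n" for A x y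
    using that by (simp add: qconv_eq mult.commute)
qed (simp add: lincomb_in_qbasis[OF d_pos])

lemma W1_qconv_le:
  assumes "qstate d n \<rho>1" "qstate d n \<rho>2" "qstate d n \<sigma>1" "qstate d n \<sigma>2"
  shows "W1 d n (mdiff (conv \<rho>1 \<sigma>1) (conv \<rho>2 \<sigma>2)) \<le> W1 d n (mdiff \<rho>1 \<rho>2) + W1 d n (mdiff \<sigma>1 \<sigma>2)"
proof -
  have "W1 d n (mdiff (conv \<rho>1 \<sigma>1) (conv \<rho>2 \<sigma>2))
      \<le> W1 d n (mdiff (conv \<rho>1 \<sigma>1) (conv \<rho>2 \<sigma>1)) + W1 d n (mdiff (conv \<rho>2 \<sigma>1) (conv \<rho>2 \<sigma>2))"
    using assms by (intro W1_triangle W1_costs_nonempty d_pos qstate_qconv) (simp_all add: mdiff_def)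
  also have "\<dots> \<le> W1 d n (mdiff \<rho>1 \<rho>2) + W1 d n (mdiff \<sigma>1 \<sigma>2)"
    using assms by (intro add_mono W1_qconv_left_le W1_qconv_right_le)
  finally show ?thesis .
qed

end

theorem mainTheorem9:
  fixes d n :: nat and g00 g01 g10 g11 :: int
    and \<rho> \<tau> \<sigma> \<rho>1 \<rho>2 \<sigma>1 \<sigma>2 :: "(nat \<Rightarrow> nat) \<Rightarrow> (nat \<Rightarrow> nat) \<Rightarrow> complex"
  assumes "prime d" and "n \<ge> 1"
    and "det2 g00 g01 g10 g11 mod int d \<noteq> 0"
    and "qstate d n \<rho>" "qstate d n \<tau>" "qstate d n \<sigma>"
    and "qstate d n \<rho>1" "qstate d n \<rho>2" "qstate d n \<sigma>1" "qstate d n \<sigma>2"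
  shows "(odd_pos d g00 g01 g10 g11 \<longrightarrow>
            W1 d n (mdiff (qconv d n g00 g01 g10 g11 \<sigma> \<rho>) (qconv d n g00 g01 g10 g11 \<sigma> \<tau>))
              \<le> W1 d n (mdiff \<rho> \<tau>))
       \<and> (even_pos d g00 g01 g10 g11 \<longrightarrow>
            W1 d n (mdiff (qconv d n g00 g01 g10 g11 \<rho> \<sigma>) (qconv d n g00 g01 g10 g11 \<tau> \<sigma>))
              \<le> W1 d n (mdiff \<rho> \<tau>))
       \<and> (positive_G d g00 g01 g10 g11 \<longrightarrow>
            W1 d n (mdiff (qconv d n g00 g01 g10 g11 \<rho>1 \<sigma>1) (qconv d n g00 g01 g10 g11 \<rho>2 \<sigma>2))
              \<le> W1 d n (mdiff \<rho>1 \<rho>2) + W1 d n (mdiff \<sigma>1 \<sigma>2))"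
proof -
  interpret conv_setting d n g00 g01 g10 g11
    using assms(1,3) by unfold_locales
  show ?thesis
    using W1_qconv_right_le[OF assms(6,4,5)] W1_qconv_left_le[OF assms(6,4,5)] W1_qconv_le[OF assms(7-10)]
    by blast
qed

end
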